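(* Let $G$ be a group whose abelianization $G_{ab}$ is finitely generated, and let $\bar G=G_{ab}/G_{ab}^{torsion}$. Then there is a generating set $\bar S$ for $\bar G$ and a weight function $\bar f:\bar S\to\mathbb N^+$ such that $\alpha_1(\bar G,L_{\bar G})$ is injective, where $L_{\bar G}$ is the word-length function determined by $\bar f$.
   Context: The word-length function determined by a generating set $\bar S$ and $\bar f:\bar S\to\mathbb N^+$ is $L(g)=\min\{\sum_i\bar f(x_i): g=x_1^{\pm1}\cdots x_r^{\pm1},x_i\in\bar S\}$. For a group $G$ with word-length function $L$, $PH^*(G;\mathbb Q)$ is the cohomology of the subcomplex of the bar cochain complex $\mathrm{Hom}_G(C_*(EG;\mathbb Q),\mathbb Q)$ of $G$-equivariant cochains $\psi$ with $|\psi(1,g_1,\dots,g_n)|\le C(1+\sum_iL(g_i))^k$ for some $C,k$. The inclusion induces $\eta:PH^*(G;\mathbb Q)\to H^*(G;\mathbb Q)$, and $\alpha_*(G,L)$ is the composite $H_*(G;\mathbb Q)\to(H^*(G;\mathbb Q))^*\xrightarrow{\eta^*}(PH^*(G;\mathbb Q))^*$. *)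

theory Defs
  imports Complex_Main "HOL-Algebra.Algebra"
begin

definition abelianization :: "('a, 'b) monoid_scheme \<Rightarrow> 'a set monoid" where
  "abelianization G = G Mod (derived G (carrier G))"

definition torsion_subgroup :: "('a, 'b) monoid_scheme \<Rightarrow> 'a set" where
  "torsion_subgroup H = {x \<in> carrier H. \<exists>n::nat. n > 0 \<and> x [^]\<^bsub>H\<^esub> n = \<one>\<^bsub>H\<^esub>}"

definition free_abelianization :: "('a, 'b) monoid_scheme \<Rightarrow> 'a set set monoid" where
  "free_abelianization G =
     abelianization G Mod torsion_subgroup (abelianization G)"

definition fin_generated :: "('a, 'b) monoid_scheme \<Rightarrow> bool" where
  "fin_generated H \<longleftrightarrow>
     (\<exists>S. finite S \<and> S \<subseteq> carrier H \<and> generate H S = carrier H)"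

definition word_eval :: "('a, 'b) monoid_scheme \<Rightarrow> ('a \<times> bool) list \<Rightarrow> 'a" where
  "word_eval H w =
     foldr (\<lambda>(x, b) acc. (if b then x else inv\<^bsub>H\<^esub> x) \<otimes>\<^bsub>H\<^esub> acc) w \<one>\<^bsub>H\<^esub>"

definition word_length :: "('a, 'b) monoid_scheme \<Rightarrow> 'a set \<Rightarrow> ('a \<Rightarrow> nat) \<Rightarrow> 'a \<Rightarrow> nat" where
  "word_length H S f g =
     (LEAST m. \<exists>w. set (map fst w) \<subseteq> S \<and> word_eval H w = g
                  \<and> sum_list (map (f \<circ> fst) w) = m)"

text \<open>A G-equivariant n-simplex (1, g1, ..., gn) of EG (modulo the G-action) is
  represented by the list [g1,...,gn].  Face i of (1,g1,...,g_{n+1}) deletes the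
  i-th entry (i = 0..n+1) and renormalises the first entry to 1 using the action.\<close>
definition bar_face :: "('a, 'b) monoid_scheme \<Rightarrow> nat \<Rightarrow> 'a list \<Rightarrow> 'a list" where
  "bar_face H i xs =
     (if i = 0 then map (\<lambda>g. inv\<^bsub>H\<^esub> (hd xs) \<otimes>\<^bsub>H\<^esub> g) (tl xs)
      else take (i - 1) xs @ drop i xs)"

definition bar_simplices :: "('a, 'b) monoid_scheme \<Rightarrow> nat \<Rightarrow> 'a list set" where
  "bar_simplices H n = {xs. set xs \<subseteq> carrier H \<and> length xs = n}"

text \<open>n-chains of C_*(EG;Q) (x)_G Q: finitely supported rational combinations of simplices.\<close>
definition is_bar_chain :: "('a, 'b) monoid_scheme \<Rightarrow> nat \<Rightarrow> ('a list \<Rightarrow> rat) \<Rightarrow> bool" where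
  "is_bar_chain H n c \<longleftrightarrow>
     finite {xs. c xs \<noteq> 0} \<and> {xs. c xs \<noteq> 0} \<subseteq> bar_simplices H n"

definition bar_boundary :: "('a, 'b) monoid_scheme \<Rightarrow> ('a list \<Rightarrow> rat) \<Rightarrow> 'a list \<Rightarrow> rat" where
  "bar_boundary H c ys =
     (\<Sum>xs\<in>{xs. c xs \<noteq> 0}. \<Sum>i\<in>{0..length xs}.
        if bar_face H i xs = ys then (-1) ^ i * c xs else 0)"

definition bar_coboundary :: "('a, 'b) monoid_scheme \<Rightarrow> ('a list \<Rightarrow> rat) \<Rightarrow> 'a list \<Rightarrow> rat" where
  "bar_coboundary H \<psi> xs = (\<Sum>i\<in>{0..length xs}. (-1) ^ i * \<psi> (bar_face H i xs))"

definition poly_bounded_cochain ::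
    "('a, 'b) monoid_scheme \<Rightarrow> ('a \<Rightarrow> nat) \<Rightarrow> nat \<Rightarrow> ('a list \<Rightarrow> rat) \<Rightarrow> bool" where
  "poly_bounded_cochain H L n \<psi> \<longleftrightarrow>
     (\<exists>C::real. \<exists>k::nat. \<forall>xs\<in>bar_simplices H n.
        \<bar>real_of_rat (\<psi> xs)\<bar> \<le> C * (1 + real (sum_list (map L xs))) ^ k)"

definition poly_cocycle ::
    "('a, 'b) monoid_scheme \<Rightarrow> ('a \<Rightarrow> nat) \<Rightarrow> nat \<Rightarrow> ('a list \<Rightarrow> rat) \<Rightarrow> bool" where
  "poly_cocycle H L n \<psi> \<longleftrightarrow>
     poly_bounded_cochain H L n \<psi> \<and>
     (\<forall>xs\<in>bar_simplices H (Suc n). bar_coboundary H \<psi> xs = 0)"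

definition kronecker :: "('a list \<Rightarrow> rat) \<Rightarrow> ('a list \<Rightarrow> rat) \<Rightarrow> rat" where
  "kronecker z \<psi> = (\<Sum>xs\<in>{xs. z xs \<noteq> 0}. z xs * \<psi> xs)"

text \<open>alpha_n(H,L) : H_n(H;Q) -> (PH^n(H;Q))^* sends [z] to ([psi] |-> <psi,z>).
  It is injective iff every n-cycle pairing to zero with all polynomially bounded
  n-cocycles is a boundary.\<close>
definition alpha_injective :: "('a, 'b) monoid_scheme \<Rightarrow> ('a \<Rightarrow> nat) \<Rightarrow> nat \<Rightarrow> bool" where
  "alpha_injective H L n \<longleftrightarrow>
     (\<forall>z. is_bar_chain H n z \<and> bar_boundary H z = (\<lambda>_. 0)
          \<and> (\<forall>\<psi>. poly_cocycle H L n \<psi> \<longrightarrow> kronecker z \<psi> = 0)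
          \<longrightarrow> (\<exists>w. is_bar_chain H (Suc n) w \<and> bar_boundary H w = z))"

end

theory Submission
  imports Defs "HOL-Library.Function_Algebras"
begin

text \<open>In degree one, equivariant bar cocycles are exactly the homomorphisms \<open>G \<rightarrow> \<rat>\<close>,
  and a homomorphism grows at most linearly in the word length with respect to any finite
  generating set. Hence every 1-cocycle is polynomially bounded, \<open>PH\<^sup>1 = H\<^sup>1\<close>, and
  \<open>\<alpha>\<^sub>1\<close> is the map \<open>H\<^sub>1 \<rightarrow> (H\<^sup>1)\<^sup>*\<close>, which is injective because over a field a cycle
  that is not a boundary is detected by a linear functional vanishing on all boundaries.
  The torsion-free quotient of \<open>G\<^sub>a\<^sub>b\<close> is a quotient of a finitely generated group, so it
  has a finite generating set, and unit weights on it do the job.\<close>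

lemma (in comm_group) torsion_subgroup_is_subgroup: "subgroup (torsion_subgroup G) G"
proof (rule subgroupI)
  show "torsion_subgroup G \<subseteq> carrier G" by (auto simp: torsion_subgroup_def)
  show "torsion_subgroup G \<noteq> {}"
    by (auto simp: torsion_subgroup_def intro!: exI[of _ "\<one>"] exI[of _ 1])
next
  fix a assume "a \<in> torsion_subgroup G"
  then obtain n :: nat where "a \<in> carrier G" "n > 0" "a [^] n = \<one>"
    unfolding torsion_subgroup_def by blast
  then show "inv a \<in> torsion_subgroup G"
    by (auto simp: torsion_subgroup_def nat_pow_inv intro!: exI[of _ n])
next
  fix a b assume "a \<in> torsion_subgroup G" "b \<in> torsion_subgroup G"
  then obtain n m :: nat where a: "a \<in> carrier G" "n > 0" "a [^] n = \<one>"
    and b: "b \<in> carrier G" "m > 0" "b [^] m = \<one>"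
    unfolding torsion_subgroup_def by blast
  have "(a \<otimes> b) [^] (n * m) = (a [^] n) [^] m \<otimes> (b [^] m) [^] n"
    using a(1) b(1) by (simp add: pow_mult_distrib m_comm nat_pow_pow mult.commute)
  also have "\<dots> = \<one>" using a b by simp
  finally have "(a \<otimes> b) [^] (n * m) = \<one>" .
  moreover have "n * m > 0" using a b by simp
  ultimately show "a \<otimes> b \<in> torsion_subgroup G"
    using a b unfolding torsion_subgroup_def by blast
qed

lemma (in comm_group) torsion_subgroup_is_normal: "torsion_subgroup G \<lhd> G"
  using subgroup_imp_normal[OF torsion_subgroup_is_subgroup] .

lemma comm_group_abelianization: "group G \<Longrightarrow> comm_group (abelianization G)"
  unfolding abelianization_def by (rule group.derived_quot_is_comm_group)

lemma group_free_abelianization: "group G \<Longrightarrow> group (free_abelianization G)"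
  unfolding free_abelianization_def
  by (rule normal.factorgroup_is_group, rule comm_group.torsion_subgroup_is_normal,
      rule comm_group_abelianization)

lemma fin_generated_surj_hom_image:
  assumes "group_hom G H h" "h ` carrier G = carrier H" "fin_generated G"
  shows "fin_generated H"
proof -
  obtain S where "finite S" "S \<subseteq> carrier G" "generate G S = carrier G"
    using assms(3) unfolding fin_generated_def by blast
  then show ?thesis
    using group_hom.generate_img[OF assms(1)] group_hom.hom_closed[OF assms(1)] assms(2)
    unfolding fin_generated_def
    by (intro exI[of _ "h ` S"]) auto
qed

lemma fin_generated_free_abelianization:
  assumes "group G" "fin_generated (abelianization G)"
  shows "fin_generated (free_abelianization G)"
proof -
  define A where "A = abelianization G"
  interpret A: comm_group A unfolding A_def using comm_group_abelianization[OF assms(1)] .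
  have T: "torsion_subgroup A \<lhd> A" by (rule A.torsion_subgroup_is_normal)
  have "group_hom A (A Mod torsion_subgroup A) (\<lambda>a. torsion_subgroup A #>\<^bsub>A\<^esub> a)"
    using normal.r_coset_hom_Mod[OF T] normal.factorgroup_is_group[OF T] A.group_axioms
    by (simp add: group_hom_def group_hom_axioms_def)
  moreover have "(\<lambda>a. torsion_subgroup A #>\<^bsub>A\<^esub> a) ` carrier A = carrier (A Mod torsion_subgroup A)"
    by (auto simp: FactGroup_def RCOSETS_def)
  ultimately show ?thesis
    using fin_generated_surj_hom_image assms(2)
    unfolding free_abelianization_def A_def by blast
qed

lemma vector_space_field_mult: "vector_space ((*) :: 'k::field \<Rightarrow> 'k \<Rightarrow> 'k)"
  unfolding vector_space_def by (simp add: algebra_simps)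

lemma (in vector_space) linear_functional_separates_from_span:
  assumes "z \<notin> span B"
  obtains \<phi> where "Vector_Spaces.linear scale (*) \<phi>" "\<And>b. b \<in> B \<Longrightarrow> \<phi> b = 0" "\<phi> z = 1"
proof -
  interpret pair: vector_space_pair scale "(*) :: 'a \<Rightarrow> 'a \<Rightarrow> 'a"
    by (simp add: vector_space_pair_def vector_space_axioms vector_space_field_mult)
  obtain C where C: "C \<subseteq> span B" "independent C" "span B \<subseteq> span C"
    using maximal_independent_subset[of "span B"] by blast
  have "span C \<subseteq> span B" using span_mono[OF C(1)] span_span by simp
  then have "z \<notin> span C" using assms by blast
  then have "independent (insert z C)" "z \<notin> C"
    using independent_insertI C(2) span_base by blast+
  then obtain \<phi> where \<phi>: "Vector_Spaces.linear scale (*) \<phi>"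
      "\<forall>x\<in>insert z C. \<phi> x = (if x = z then 1 else 0)"
    using pair.linear_independent_extend[of "insert z C" "\<lambda>x. if x = z then 1 else 0"] by blast
  have "\<phi> b = 0" if "b \<in> B" for b
    using pair.linear_eq_0_on_span[OF \<phi>(1), of C b] \<phi>(2) \<open>z \<notin> C\<close> C(3) span_base[OF that]
    by force
  with \<phi> that show ?thesis by auto
qed

definition scale_fun :: "'k::field \<Rightarrow> ('x \<Rightarrow> 'k) \<Rightarrow> 'x \<Rightarrow> 'k" where
  "scale_fun c f = (\<lambda>x. c * f x)"

lemma vector_space_scale_fun: "vector_space (scale_fun :: 'k::field \<Rightarrow> ('x \<Rightarrow> 'k) \<Rightarrow> _)"
  unfolding vector_space_def scale_fun_def by (simp add: fun_eq_iff algebra_simps)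

lemma sum_fun_apply: "(\<Sum>i\<in>A. f i) x = (\<Sum>i\<in>A. f i x)"
  by (induct A rule: infinite_finite_induct) auto

definition unit_chain :: "'x \<Rightarrow> 'x \<Rightarrow> rat" where
  "unit_chain xs = (\<lambda>ys. if ys = xs then 1 else 0)"

lemma support_unit_chain: "{ys. unit_chain xs ys \<noteq> 0} = {xs}"
  by (auto simp: unit_chain_def)

lemma chain_eq_sum_unit_chains:
  assumes "finite {xs. c xs \<noteq> 0}"
  shows "c = (\<Sum>xs\<in>{xs. c xs \<noteq> 0}. scale_fun (c xs) (unit_chain xs))"
proof
  fix ys
  have "(\<Sum>xs\<in>{xs. c xs \<noteq> 0}. scale_fun (c xs) (unit_chain xs)) ys
      = (\<Sum>xs\<in>{xs. c xs \<noteq> 0}. if ys = xs then c xs else 0)"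
    unfolding sum_fun_apply scale_fun_def unit_chain_def by (rule sum.cong) auto
  also have "\<dots> = c ys" using assms by (simp add: sum.delta)
  finally show "c ys = (\<Sum>xs\<in>{xs. c xs \<noteq> 0}. scale_fun (c xs) (unit_chain xs)) ys" by simp
qed

definition face_incidence :: "('a, 'b) monoid_scheme \<Rightarrow> 'a list \<Rightarrow> 'a list \<Rightarrow> rat" where
  "face_incidence H xs ys = (\<Sum>i\<in>{0..length xs}. if bar_face H i xs = ys then (-1) ^ i else 0)"

lemma bar_boundary_eq_sum:
  assumes "finite S" "{xs. c xs \<noteq> 0} \<subseteq> S"
  shows "bar_boundary H c ys = (\<Sum>xs\<in>S. c xs * face_incidence H xs ys)"
proof -
  have "bar_boundary H c ys = (\<Sum>xs\<in>{xs. c xs \<noteq> 0}. c xs * face_incidence H xs ys)"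
    unfolding bar_boundary_def face_incidence_def sum_distrib_left
    by (intro sum.cong) auto
  also have "\<dots> = (\<Sum>xs\<in>S. c xs * face_incidence H xs ys)"
    by (rule sum.mono_neutral_left) (use assms in auto)
  finally show ?thesis .
qed

lemma bar_boundary_unit_chain:
  "bar_boundary H (unit_chain xs)
     = (\<Sum>i\<in>{0..length xs}. scale_fun ((-1) ^ i) (unit_chain (bar_face H i xs)))"
proof
  fix ys
  have "bar_boundary H (unit_chain xs) ys = face_incidence H xs ys"
    using bar_boundary_eq_sum[of "{xs}" "unit_chain xs" H ys]
    by (simp add: support_unit_chain unit_chain_def)
  then show "bar_boundary H (unit_chain xs) ys
      = (\<Sum>i\<in>{0..length xs}. scale_fun ((-1) ^ i) (unit_chain (bar_face H i xs))) ys"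
    unfolding sum_fun_apply face_incidence_def scale_fun_def unit_chain_def
    by (auto intro: sum.cong)
qed

lemma bar_boundary_add:
  assumes "finite {xs. c xs \<noteq> 0}" "finite {xs. d xs \<noteq> 0}"
  shows "bar_boundary H (c + d) = bar_boundary H c + bar_boundary H d"
proof
  fix ys
  define S where "S = {xs. c xs \<noteq> 0} \<union> {xs. d xs \<noteq> 0}"
  have S: "finite S" "{xs. c xs \<noteq> 0} \<subseteq> S" "{xs. d xs \<noteq> 0} \<subseteq> S"
    unfolding S_def using assms by auto
  have S_sum: "{xs. (c + d) xs \<noteq> 0} \<subseteq> S" unfolding S_def by auto
  have "bar_boundary H (c + d) ys = (\<Sum>xs\<in>S. (c + d) xs * face_incidence H xs ys)"
    using bar_boundary_eq_sum[OF S(1) S_sum] .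
  also have "\<dots> = (\<Sum>xs\<in>S. c xs * face_incidence H xs ys) + (\<Sum>xs\<in>S. d xs * face_incidence H xs ys)"
    by (simp add: sum.distrib distrib_right)
  also have "\<dots> = bar_boundary H c ys + bar_boundary H d ys"
    by (simp only: bar_boundary_eq_sum[OF S(1,2)] bar_boundary_eq_sum[OF S(1,3)])
  finally show "bar_boundary H (c + d) ys = (bar_boundary H c + bar_boundary H d) ys"
    by (simp only: plus_fun_apply)
qed

lemma bar_boundary_scale:
  assumes "finite {xs. c xs \<noteq> 0}"
  shows "bar_boundary H (scale_fun a c) = scale_fun a (bar_boundary H c)"
proof
  fix ys
  have "{xs. scale_fun a c xs \<noteq> 0} \<subseteq> {xs. c xs \<noteq> 0}" by (auto simp: scale_fun_def)
  from bar_boundary_eq_sum[OF assms this]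
  have "bar_boundary H (scale_fun a c) ys
      = (\<Sum>xs\<in>{xs. c xs \<noteq> 0}. a * c xs * face_incidence H xs ys)"
    by (simp add: scale_fun_def)
  also have "\<dots> = a * bar_boundary H c ys"
    by (simp add: bar_boundary_eq_sum[OF assms order_refl] sum_distrib_left mult.assoc)
  finally show "bar_boundary H (scale_fun a c) ys = scale_fun a (bar_boundary H c) ys"
    by (simp add: scale_fun_def)
qed

definition bar_boundaries :: "('a, 'b) monoid_scheme \<Rightarrow> nat \<Rightarrow> ('a list \<Rightarrow> rat) set" where
  "bar_boundaries H n = {v. \<exists>w. is_bar_chain H n w \<and> bar_boundary H w = v}"

lemma subspace_bar_boundaries:
  "module.subspace scale_fun (bar_boundaries H n)"
proof -
  interpret vector_space "scale_fun :: rat \<Rightarrow> ('a list \<Rightarrow> rat) \<Rightarrow> _"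
    by (rule vector_space_scale_fun)
  show ?thesis
  proof (rule subspaceI)
    have "is_bar_chain H n 0" "bar_boundary H 0 = 0"
      by (simp_all add: is_bar_chain_def bar_boundary_def fun_eq_iff)
    then show "0 \<in> bar_boundaries H n" unfolding bar_boundaries_def by blast
  next
    fix u v assume "u \<in> bar_boundaries H n" "v \<in> bar_boundaries H n"
    then obtain c d where c: "is_bar_chain H n c" "bar_boundary H c = u"
      and d: "is_bar_chain H n d" "bar_boundary H d = v"
      unfolding bar_boundaries_def by blast
    have "{xs. (c + d) xs \<noteq> 0} \<subseteq> {xs. c xs \<noteq> 0} \<union> {xs. d xs \<noteq> 0}" by auto
    then have "is_bar_chain H n (c + d)"
      using c(1) d(1) unfolding is_bar_chain_def by (meson finite_Un finite_subset le_sup_iff subset_trans)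
    moreover have "bar_boundary H (c + d) = u + v"
      using c d bar_boundary_add unfolding is_bar_chain_def by blast
    ultimately show "u + v \<in> bar_boundaries H n" unfolding bar_boundaries_def by blast
  next
    fix a u assume "u \<in> bar_boundaries H n"
    then obtain c where c: "is_bar_chain H n c" "bar_boundary H c = u"
      unfolding bar_boundaries_def by blast
    have "{xs. scale_fun a c xs \<noteq> 0} \<subseteq> {xs. c xs \<noteq> 0}" by (auto simp: scale_fun_def)
    then have "is_bar_chain H n (scale_fun a c)"
      using c(1) unfolding is_bar_chain_def by (meson finite_subset subset_trans)
    moreover have "bar_boundary H (scale_fun a c) = scale_fun a u"
      using c bar_boundary_scale unfolding is_bar_chain_def by blast
    ultimately show "scale_fun a u \<in> bar_boundaries H n" unfolding bar_boundaries_def by blast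
  qed
qed

lemma span_unit_chain_boundaries_subset:
  "module.span scale_fun {bar_boundary H (unit_chain xs) | xs. xs \<in> bar_simplices H n}
     \<subseteq> bar_boundaries H n"
proof -
  interpret vector_space "scale_fun :: rat \<Rightarrow> ('a list \<Rightarrow> rat) \<Rightarrow> _"
    by (rule vector_space_scale_fun)
  have "is_bar_chain H n (unit_chain xs)" if "xs \<in> bar_simplices H n" for xs
    using that unfolding is_bar_chain_def support_unit_chain by simp
  then have "{bar_boundary H (unit_chain xs) | xs. xs \<in> bar_simplices H n} \<subseteq> bar_boundaries H n"
    unfolding bar_boundaries_def by blast
  from span_minimal[OF this subspace_bar_boundaries] show ?thesis .
qed

definition bar_cocycle :: "('a, 'b) monoid_scheme \<Rightarrow> nat \<Rightarrow> ('a list \<Rightarrow> rat) \<Rightarrow> bool" where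
  "bar_cocycle H n \<psi> \<longleftrightarrow> (\<forall>xs\<in>bar_simplices H (Suc n). bar_coboundary H \<psi> xs = 0)"

lemma cocycle_detects_non_boundary:
  fixes H :: "('a, 'b) monoid_scheme"
  assumes "finite {xs. z xs \<noteq> 0}" "z \<notin> bar_boundaries H (Suc n)"
  obtains \<psi> where "bar_cocycle H n \<psi>" "kronecker z \<psi> = 1"
proof -
  interpret V: vector_space "scale_fun :: rat \<Rightarrow> ('a list \<Rightarrow> rat) \<Rightarrow> _"
    by (rule vector_space_scale_fun)
  have "z \<notin> V.span {bar_boundary H (unit_chain xs) | xs. xs \<in> bar_simplices H (Suc n)}"
    using span_unit_chain_boundaries_subset assms(2) by (rule contra_subsetD)
  then obtain \<phi> where \<phi>: "Vector_Spaces.linear scale_fun (*) \<phi>"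
      "\<And>xs. xs \<in> bar_simplices H (Suc n) \<Longrightarrow> \<phi> (bar_boundary H (unit_chain xs)) = 0"
      "\<phi> z = 1"
    by (rule V.linear_functional_separates_from_span) blast+
  interpret \<phi>: Vector_Spaces.linear scale_fun "(*) :: rat \<Rightarrow> rat \<Rightarrow> rat" \<phi> by (rule \<phi>(1))
  define \<psi> where "\<psi> xs = \<phi> (unit_chain xs)" for xs
  have "bar_coboundary H \<psi> xs = \<phi> (bar_boundary H (unit_chain xs))" for xs
    unfolding bar_boundary_unit_chain bar_coboundary_def \<psi>_def by (simp add: \<phi>.sum \<phi>.scale)
  then have "bar_cocycle H n \<psi>"
    using \<phi>(2) unfolding bar_cocycle_def by simp
  moreover have "kronecker z \<psi> = \<phi> z"
    unfolding kronecker_def \<psi>_def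
    by (subst (2) chain_eq_sum_unit_chains[OF assms(1)]) (simp add: \<phi>.sum \<phi>.scale)
  ultimately show ?thesis using that \<phi>(3) by simp
qed

lemma alpha_injective_if_cocycles_poly_bounded:
  assumes "\<And>\<psi>. bar_cocycle H n \<psi> \<Longrightarrow> poly_bounded_cochain H L n \<psi>"
  shows "alpha_injective H L n"
  unfolding alpha_injective_def
proof (intro allI impI)
  fix z
  assume z: "is_bar_chain H n z \<and> bar_boundary H z = (\<lambda>_. 0)
      \<and> (\<forall>\<psi>. poly_cocycle H L n \<psi> \<longrightarrow> kronecker z \<psi> = 0)"
  show "\<exists>w. is_bar_chain H (Suc n) w \<and> bar_boundary H w = z"
  proof (rule ccontr)
    assume "\<not> ?thesis"
    then have "z \<notin> bar_boundaries H (Suc n)" unfolding bar_boundaries_def by blast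
    moreover have "finite {xs. z xs \<noteq> 0}" using z unfolding is_bar_chain_def by blast
    ultimately obtain \<psi> where \<psi>: "bar_cocycle H n \<psi>" "kronecker z \<psi> = 1"
      using cocycle_detects_non_boundary by blast
    have "poly_cocycle H L n \<psi>"
      using assms[OF \<psi>(1)] \<psi>(1) unfolding poly_cocycle_def bar_cocycle_def by simp
    with z \<psi>(2) show False by simp
  qed
qed

lemma word_eval_Nil [simp]: "word_eval H [] = \<one>\<^bsub>H\<^esub>"
  by (simp add: word_eval_def)

lemma word_eval_Cons [simp]:
  "word_eval H ((x, b) # w) = (if b then x else inv\<^bsub>H\<^esub> x) \<otimes>\<^bsub>H\<^esub> word_eval H w"
  by (simp add: word_eval_def)

context group
begin

lemma word_eval_closed: "set (map fst w) \<subseteq> carrier G \<Longrightarrow> word_eval G w \<in> carrier G"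
  by (induct w) auto

lemma word_eval_append:
  "set (map fst v) \<subseteq> carrier G \<Longrightarrow> set (map fst w) \<subseteq> carrier G \<Longrightarrow>
   word_eval G (v @ w) = word_eval G v \<otimes> word_eval G w"
  by (induct v) (auto simp: m_assoc word_eval_closed)

lemma generate_imp_word_eval:
  assumes "S \<subseteq> carrier G" "g \<in> generate G S"
  shows "\<exists>w. set (map fst w) \<subseteq> S \<and> word_eval G w = g"
  using assms(2)
proof induct
  case one
  show ?case by (auto intro!: exI[of _ "[]"])
next
  case (incl h)
  with assms(1) show ?case by (auto intro!: exI[of _ "[(h, True)]"])
next
  case (inv h)
  with assms(1) show ?case by (auto intro!: exI[of _ "[(h, False)]"])
next
  case (eng h1 h2)
  then obtain v w where "set (map fst v) \<subseteq> S" "word_eval G v = h1"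
    "set (map fst w) \<subseteq> S" "word_eval G w = h2" by blast
  with assms(1) show ?case by (intro exI[of _ "v @ w"]) (auto simp: word_eval_append)
qed

lemma word_length_attained:
  assumes "S \<subseteq> carrier G" "g \<in> generate G S"
  obtains w where "set (map fst w) \<subseteq> S" "word_eval G w = g"
    "sum_list (map (f \<circ> fst) w) = word_length G S f g"
proof -
  let ?P = "\<lambda>m. \<exists>w. set (map fst w) \<subseteq> S \<and> word_eval G w = g \<and> sum_list (map (f \<circ> fst) w) = m"
  have "\<exists>m. ?P m" using generate_imp_word_eval[OF assms] by blast
  then have "?P (LEAST m. ?P m)" by (rule LeastI_ex)
  then show ?thesis using that unfolding word_length_def by blast
qed

lemma bar_1_cocycle_hom:
  assumes "bar_cocycle G 1 \<psi>" "a \<in> carrier G" "b \<in> carrier G"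
  shows "\<psi> [a \<otimes> b] = \<psi> [a] + \<psi> [b]" and "\<psi> [inv a] = - \<psi> [a]"
proof -
  have cocycle: "\<psi> [inv x \<otimes> y] - \<psi> [y] + \<psi> [x] = 0"
    if "x \<in> carrier G" "y \<in> carrier G" for x y
  proof -
    have "[x, y] \<in> bar_simplices G (Suc 1)" using that by (auto simp: bar_simplices_def)
    then have "bar_coboundary G \<psi> [x, y] = 0" using assms(1) unfolding bar_cocycle_def by blast
    then show ?thesis by (simp add: bar_coboundary_def bar_face_def sum.atLeast0_atMost_Suc)
  qed
  have "\<psi> [\<one>] = 0" using cocycle[of \<one> \<one>] by simp
  then show inv: "\<psi> [inv a] = - \<psi> [a]" using cocycle[of a \<one>] assms(2) by simp
  show "\<psi> [a \<otimes> b] = \<psi> [a] + \<psi> [b]" using cocycle[of "inv a" b] assms(2,3) inv by simp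
qed

lemma bar_1_cocycle_word_eval_bound:
  assumes "bar_cocycle G 1 \<psi>" "S \<subseteq> carrier G" "\<forall>s\<in>S. f s > 0"
    and "\<forall>s\<in>S. \<bar>\<psi> [s]\<bar> \<le> M" "set (map fst w) \<subseteq> S"
  shows "\<bar>\<psi> [word_eval G w]\<bar> \<le> M * of_nat (sum_list (map (f \<circ> fst) w))"
  using assms(5)
proof (induct w)
  case Nil
  show ?case using bar_1_cocycle_hom(1)[OF assms(1) one_closed one_closed] by simp
next
  case (Cons p w)
  obtain x b where p: "p = (x, b)" by (cases p)
  have x: "x \<in> S" "x \<in> carrier G" and w: "set (map fst w) \<subseteq> S"
    using Cons.prems p assms(2) by auto
  then have "word_eval G w \<in> carrier G" using assms(2) word_eval_closed by blast
  then have "\<psi> [word_eval G (p # w)] = (if b then \<psi> [x] else - \<psi> [x]) + \<psi> [word_eval G w]"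
    using x(2) by (simp add: p bar_1_cocycle_hom[OF assms(1)])
  also have "\<bar>\<dots>\<bar> \<le> \<bar>\<psi> [x]\<bar> + \<bar>\<psi> [word_eval G w]\<bar>" by (cases b) auto
  also have "\<dots> \<le> M * of_nat (f x) + M * of_nat (sum_list (map (f \<circ> fst) w))"
  proof (rule add_mono)
    have "M \<ge> 0" using assms(4) x(1) by force
    moreover have "f x \<ge> 1" using assms(3) x(1) by (simp add: Suc_le_eq)
    ultimately show "\<bar>\<psi> [x]\<bar> \<le> M * of_nat (f x)"
      using assms(4) x(1) by (metis mult_left_mono mult_cancel_left1 of_nat_1 of_nat_mono order_trans)
    show "\<bar>\<psi> [word_eval G w]\<bar> \<le> M * of_nat (sum_list (map (f \<circ> fst) w))"
      using Cons.hyps w .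
  qed
  also have "\<dots> = M * of_nat (sum_list (map (f \<circ> fst) (p # w)))"
    by (simp add: p distrib_left)
  finally show ?case .
qed

lemma bar_1_cocycle_poly_bounded:
  assumes "bar_cocycle G 1 \<psi>" "finite S" "S \<subseteq> carrier G" "generate G S = carrier G"
    and "\<forall>s\<in>S. f s > 0"
  shows "poly_bounded_cochain G (word_length G S f) 1 \<psi>"
  unfolding poly_bounded_cochain_def
proof (intro exI ballI)
  define M where "M = (\<Sum>s\<in>S. \<bar>\<psi> [s]\<bar>)"
  have M: "\<forall>s\<in>S. \<bar>\<psi> [s]\<bar> \<le> M"
    unfolding M_def using assms(2) by (intro ballI member_le_sum) auto
  have "M \<ge> 0" unfolding M_def by (intro sum_nonneg) auto
  fix xs assume "xs \<in> bar_simplices G 1"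
  then obtain g where g: "xs = [g]" "g \<in> carrier G"
    unfolding bar_simplices_def by (cases xs) auto
  then obtain w where w: "set (map fst w) \<subseteq> S" "word_eval G w = g"
      "sum_list (map (f \<circ> fst) w) = word_length G S f g"
    using word_length_attained[OF assms(3)] assms(4) by blast
  have "\<bar>\<psi> xs\<bar> \<le> M * of_nat (word_length G S f g)"
    using bar_1_cocycle_word_eval_bound[OF assms(1,3,5) M w(1)] w(2,3) g(1) by simp
  also have "\<dots> \<le> M * (1 + of_nat (word_length G S f g))"
    using \<open>M \<ge> 0\<close> by (intro mult_left_mono) auto
  finally have "\<bar>real_of_rat (\<psi> xs)\<bar> \<le> real_of_rat (M * (1 + of_nat (word_length G S f g)))"
    unfolding abs_le_iff by (simp add: of_rat_less_eq flip: of_rat_minus)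
  then show "\<bar>real_of_rat (\<psi> xs)\<bar>
      \<le> real_of_rat M * (1 + real (sum_list (map (word_length G S f) xs))) ^ 1"
    unfolding g(1) by (simp add: of_rat_mult of_rat_add)
qed

theorem alpha_1_injective_word_length:
  assumes "finite S" "S \<subseteq> carrier G" "generate G S = carrier G" "\<forall>s\<in>S. f s > 0"
  shows "alpha_injective G (word_length G S f) 1"
  by (rule alpha_injective_if_cocycles_poly_bounded, rule bar_1_cocycle_poly_bounded[OF _ assms])

end

theorem lemma1p4p1:
  fixes G :: "('a, 'c) monoid_scheme"
  assumes "group G"
    and "fin_generated (abelianization G)"
  shows "\<exists>(Sb :: 'a set set set) (fb :: 'a set set \<Rightarrow> nat).
           Sb \<subseteq> carrier (free_abelianization G)
         \<and> generate (free_abelianization G) Sb = carrier (free_abelianization G)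
         \<and> (\<forall>s\<in>Sb. fb s > 0)
         \<and> alpha_injective (free_abelianization G)
               (word_length (free_abelianization G) Sb fb) 1"
proof -
  obtain Sb where Sb: "finite Sb" "Sb \<subseteq> carrier (free_abelianization G)"
      "generate (free_abelianization G) Sb = carrier (free_abelianization G)"
    using fin_generated_free_abelianization[OF assms] unfolding fin_generated_def by blast
  have "alpha_injective (free_abelianization G) (word_length (free_abelianization G) Sb (\<lambda>_. 1)) 1"
    by (rule group.alpha_1_injective_word_length[OF group_free_abelianization[OF assms(1)] Sb]) simp
  with Sb(2,3) show ?thesis by (intro exI[of _ Sb] exI[of _ "\<lambda>_. 1"]) simp
qed

end
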